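(* Let $\mathcal{A}$ be an abelian category with enough projective and enough injective objects such that $\mathrm{sidp}(\mathcal{A})<\infty$. If $M\in\mathcal{A}$ admits an exact sequence $0\to M\to P^0\to P^1\to\cdots$ with every $P^i$ projective, then $M$ is Gorenstein projective.
   Context: $\mathrm{sidp}(\mathcal{A})$ is the supremum of the injective dimensions of all projective objects of $\mathcal{A}$. An object is Gorenstein projective if it is isomorphic to $Z^0(P^\bullet)$ for an acyclic complex $P^\bullet$ of projectives with $\mathrm{Hom}(P^\bullet,Q)$ acyclic for every projective $Q$. *)

theory Defs
  imports Main "HOL-Library.Extended_Nat"
begin

text \<open>A category with objects of type 'o and morphisms of type 'm, together with a
  preadditive structure (addition and zero morphisms on each hom-set).
  Composition convention: Comp C g f is g after f.\<close>

record ('o, 'm) acat =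
  Obj  :: "'o set"
  Mor  :: "'m set"
  Dom  :: "'m \<Rightarrow> 'o"
  Cod  :: "'m \<Rightarrow> 'o"
  Comp :: "'m \<Rightarrow> 'm \<Rightarrow> 'm"
  Id   :: "'o \<Rightarrow> 'm"
  Add  :: "'m \<Rightarrow> 'm \<Rightarrow> 'm"
  Zero :: "'o \<Rightarrow> 'o \<Rightarrow> 'm"

definition hom :: "('o,'m) acat \<Rightarrow> 'o \<Rightarrow> 'o \<Rightarrow> 'm set" where
  "hom C a b = {f \<in> Mor C. Dom C f = a \<and> Cod C f = b}"

definition is_category :: "('o,'m) acat \<Rightarrow> bool" where
  "is_category C \<longleftrightarrow>
     (\<forall>f \<in> Mor C. Dom C f \<in> Obj C \<and> Cod C f \<in> Obj C) \<and>
     (\<forall>a \<in> Obj C. Id C a \<in> hom C a a) \<and>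
     (\<forall>f \<in> Mor C. \<forall>g \<in> Mor C. Cod C f = Dom C g \<longrightarrow>
         Comp C g f \<in> hom C (Dom C f) (Cod C g)) \<and>
     (\<forall>f \<in> Mor C. \<forall>g \<in> Mor C. \<forall>h \<in> Mor C. Cod C f = Dom C g \<and> Cod C g = Dom C h \<longrightarrow>
         Comp C h (Comp C g f) = Comp C (Comp C h g) f) \<and>
     (\<forall>f \<in> Mor C. Comp C f (Id C (Dom C f)) = f \<and> Comp C (Id C (Cod C f)) f = f)"

definition is_preadditive :: "('o,'m) acat \<Rightarrow> bool" where
  "is_preadditive C \<longleftrightarrow>
     (\<forall>a \<in> Obj C. \<forall>b \<in> Obj C.
        Zero C a b \<in> hom C a b \<and>
        (\<forall>f \<in> hom C a b. \<forall>g \<in> hom C a b. Add C f g \<in> hom C a b \<and> Add C f g = Add C g f) \<and>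
        (\<forall>f \<in> hom C a b. \<forall>g \<in> hom C a b. \<forall>h \<in> hom C a b.
            Add C (Add C f g) h = Add C f (Add C g h)) \<and>
        (\<forall>f \<in> hom C a b. Add C f (Zero C a b) = f) \<and>
        (\<forall>f \<in> hom C a b. \<exists>g \<in> hom C a b. Add C f g = Zero C a b)) \<and>
     (\<forall>a \<in> Obj C. \<forall>b \<in> Obj C. \<forall>c \<in> Obj C.
        \<forall>f \<in> hom C a b. \<forall>f' \<in> hom C a b. \<forall>g \<in> hom C b c. \<forall>g' \<in> hom C b c.
          Comp C g (Add C f f') = Add C (Comp C g f) (Comp C g f') \<and>
          Comp C (Add C g g') f = Add C (Comp C g f) (Comp C g' f))"

definition zero_object :: "('o,'m) acat \<Rightarrow> 'o \<Rightarrow> bool" where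
  "zero_object C z \<longleftrightarrow> z \<in> Obj C \<and>
     (\<forall>a \<in> Obj C. (\<exists>!f. f \<in> hom C z a) \<and> (\<exists>!f. f \<in> hom C a z))"

definition has_biproducts :: "('o,'m) acat \<Rightarrow> bool" where
  "has_biproducts C \<longleftrightarrow>
     (\<forall>a \<in> Obj C. \<forall>b \<in> Obj C. \<exists>c \<in> Obj C. \<exists>i1 i2 p1 p2.
        i1 \<in> hom C a c \<and> i2 \<in> hom C b c \<and> p1 \<in> hom C c a \<and> p2 \<in> hom C c b \<and>
        Comp C p1 i1 = Id C a \<and> Comp C p2 i2 = Id C b \<and>
        Comp C p1 i2 = Zero C b a \<and> Comp C p2 i1 = Zero C a b \<and>
        Add C (Comp C i1 p1) (Comp C i2 p2) = Id C c)"

definition is_kernel :: "('o,'m) acat \<Rightarrow> 'm \<Rightarrow> 'm \<Rightarrow> bool" where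
  "is_kernel C f k \<longleftrightarrow> f \<in> Mor C \<and> k \<in> Mor C \<and> Cod C k = Dom C f \<and>
     Comp C f k = Zero C (Dom C k) (Cod C f) \<and>
     (\<forall>x \<in> Mor C. Cod C x = Dom C f \<and> Comp C f x = Zero C (Dom C x) (Cod C f) \<longrightarrow>
        (\<exists>!u. u \<in> hom C (Dom C x) (Dom C k) \<and> Comp C k u = x))"

definition is_cokernel :: "('o,'m) acat \<Rightarrow> 'm \<Rightarrow> 'm \<Rightarrow> bool" where
  "is_cokernel C f c \<longleftrightarrow> f \<in> Mor C \<and> c \<in> Mor C \<and> Dom C c = Cod C f \<and>
     Comp C c f = Zero C (Dom C f) (Cod C c) \<and>
     (\<forall>x \<in> Mor C. Dom C x = Cod C f \<and> Comp C x f = Zero C (Dom C f) (Cod C x) \<longrightarrow>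
        (\<exists>!u. u \<in> hom C (Cod C c) (Cod C x) \<and> Comp C u c = x))"

definition mono_mor :: "('o,'m) acat \<Rightarrow> 'm \<Rightarrow> bool" where
  "mono_mor C m \<longleftrightarrow> m \<in> Mor C \<and>
     (\<forall>g \<in> Mor C. \<forall>h \<in> Mor C. Cod C g = Dom C m \<and> Cod C h = Dom C m \<and> Dom C g = Dom C h \<and>
        Comp C m g = Comp C m h \<longrightarrow> g = h)"

definition epi_mor :: "('o,'m) acat \<Rightarrow> 'm \<Rightarrow> bool" where
  "epi_mor C e \<longleftrightarrow> e \<in> Mor C \<and>
     (\<forall>g \<in> Mor C. \<forall>h \<in> Mor C. Dom C g = Cod C e \<and> Dom C h = Cod C e \<and> Cod C g = Cod C h \<and>
        Comp C g e = Comp C h e \<longrightarrow> g = h)"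

definition iso_mor :: "('o,'m) acat \<Rightarrow> 'm \<Rightarrow> bool" where
  "iso_mor C f \<longleftrightarrow> f \<in> Mor C \<and>
     (\<exists>g \<in> hom C (Cod C f) (Dom C f). Comp C g f = Id C (Dom C f) \<and> Comp C f g = Id C (Cod C f))"

definition abelian :: "('o,'m) acat \<Rightarrow> bool" where
  "abelian C \<longleftrightarrow> is_category C \<and> is_preadditive C \<and>
     (\<exists>z. zero_object C z) \<and> has_biproducts C \<and>
     (\<forall>f \<in> Mor C. \<exists>k. is_kernel C f k) \<and>
     (\<forall>f \<in> Mor C. \<exists>c. is_cokernel C f c) \<and>
     (\<forall>m. mono_mor C m \<longrightarrow> (\<exists>f. is_kernel C f m)) \<and>
     (\<forall>e. epi_mor C e \<longrightarrow> (\<exists>f. is_cokernel C f e))"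

text \<open>Exactness at the middle object of f : A \<rightarrow> B, g : B \<rightarrow> C': the image of f
  (the kernel of the cokernel of f) and the kernel of g are the same subobject of B.\<close>

definition exact_at :: "('o,'m) acat \<Rightarrow> 'm \<Rightarrow> 'm \<Rightarrow> bool" where
  "exact_at C f g \<longleftrightarrow> f \<in> Mor C \<and> g \<in> Mor C \<and> Cod C f = Dom C g \<and>
     (\<exists>c i k \<theta>. is_cokernel C f c \<and> is_kernel C c i \<and> is_kernel C g k \<and>
        iso_mor C \<theta> \<and> \<theta> \<in> hom C (Dom C i) (Dom C k) \<and> Comp C k \<theta> = i)"

definition projective :: "('o,'m) acat \<Rightarrow> 'o \<Rightarrow> bool" where
  "projective C P \<longleftrightarrow> P \<in> Obj C \<and>
     (\<forall>e f. epi_mor C e \<and> f \<in> hom C P (Cod C e) \<longrightarrow> (\<exists>g \<in> hom C P (Dom C e). Comp C e g = f))"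

definition injective :: "('o,'m) acat \<Rightarrow> 'o \<Rightarrow> bool" where
  "injective C I \<longleftrightarrow> I \<in> Obj C \<and>
     (\<forall>m f. mono_mor C m \<and> f \<in> hom C (Dom C m) I \<longrightarrow> (\<exists>g \<in> hom C (Cod C m) I. Comp C g m = f))"

definition enough_projectives :: "('o,'m) acat \<Rightarrow> bool" where
  "enough_projectives C \<longleftrightarrow>
     (\<forall>A \<in> Obj C. \<exists>P e. projective C P \<and> e \<in> hom C P A \<and> epi_mor C e)"

definition enough_injectives :: "('o,'m) acat \<Rightarrow> bool" where
  "enough_injectives C \<longleftrightarrow>
     (\<forall>A \<in> Obj C. \<exists>I m. injective C I \<and> m \<in> hom C A I \<and> mono_mor C m)"

text \<open>inj_res_len C X n: there is an exact sequence
  0 \<rightarrow> X \<rightarrow> I^0 \<rightarrow> I^1 \<rightarrow> ... \<rightarrow> I^n \<rightarrow> 0 with all I^j injective.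
  Encoded with S 0 = X, S (j+1) = I^j and maps d j : S j \<rightarrow> S (j+1), j = 0..n.\<close>

definition inj_res_len :: "('o,'m) acat \<Rightarrow> 'o \<Rightarrow> nat \<Rightarrow> bool" where
  "inj_res_len C X n \<longleftrightarrow> (\<exists>S d.
     S 0 = X \<and>
     (\<forall>j \<le> n. d j \<in> hom C (S j) (S (Suc j))) \<and>
     (\<forall>j \<le> n. injective C (S (Suc j))) \<and>
     mono_mor C (d 0) \<and>
     (\<forall>j < n. exact_at C (d j) (d (Suc j))) \<and>
     epi_mor C (d n))"

definition inj_dim :: "('o,'m) acat \<Rightarrow> 'o \<Rightarrow> enat" where
  "inj_dim C X = (INF n \<in> {n. inj_res_len C X n}. enat n)"

definition sidp :: "('o,'m) acat \<Rightarrow> enat" where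
  "sidp C = (SUP P \<in> {P. projective C P}. inj_dim C P)"

text \<open>Gorenstein projective: M is isomorphic to Z^0(P) = ker(d^0 : P^0 \<rightarrow> P^1) for an
  acyclic complex (P, d) of projectives (indexed by int, d i : P i \<rightarrow> P (i+1)) such that
  Hom(P, Q) is acyclic for every projective Q.\<close>

definition gorenstein_projective :: "('o,'m) acat \<Rightarrow> 'o \<Rightarrow> bool" where
  "gorenstein_projective C M \<longleftrightarrow> M \<in> Obj C \<and> (\<exists>(P :: int \<Rightarrow> 'o) d.
     (\<forall>i. projective C (P i)) \<and>
     (\<forall>i. d i \<in> hom C (P i) (P (i + 1))) \<and>
     (\<forall>i. exact_at C (d i) (d (i + 1))) \<and>
     (\<forall>Q. projective C Q \<longrightarrow>
        (\<forall>i. \<forall>\<phi> \<in> hom C (P i) Q.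
           Comp C \<phi> (d (i - 1)) = Zero C (P (i - 1)) Q \<longrightarrow>
           (\<exists>\<psi> \<in> hom C (P (i + 1)) Q. \<phi> = Comp C \<psi> (d i)))) \<and>
     (\<exists>k. is_kernel C (d 0) k \<and> Dom C k = M))"

end

theory Submission
  imports Defs
begin

text \<open>Splice a projective resolution \<open>\<cdots> \<rightarrow> Q\<^sub>1 \<rightarrow> Q\<^sub>0 \<rightarrow> M \<rightarrow> 0\<close> with the given
  coresolution \<open>0 \<rightarrow> M \<rightarrow> P\<^sup>0 \<rightarrow> P\<^sup>1 \<rightarrow> \<cdots>\<close> into an acyclic complex of projectives whose
  zeroth cocycle object is \<open>M\<close>. It remains to see that \<open>Hom(-, R)\<close> keeps it exact for
  projective \<open>R\<close>. Since \<open>R\<close> has a finite injective coresolution (\<open>sidp < \<infinity>\<close>), this follows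
  by induction on its length: an injective target is handled by extending morphisms along
  the exact complex, and a short exact sequence \<open>0 \<rightarrow> X \<rightarrow> I \<rightarrow> X' \<rightarrow> 0\<close> with \<open>I\<close> injective
  passes exactness from \<open>X'\<close> back to \<open>X\<close>, lifting through \<open>I \<rightarrow> X'\<close> with projectivity.\<close>

locale abelian_category =
  fixes C :: "('o,'m) acat"
  assumes abelian: "abelian C"
begin

lemma category: "is_category C" and preadditive: "is_preadditive C"
  using abelian unfolding abelian_def by auto

lemma hom_iff: "f \<in> hom C a b \<longleftrightarrow> f \<in> Mor C \<and> Dom C f = a \<and> Cod C f = b"
  by (simp add: hom_def)

lemma hom_objs: "f \<in> hom C a b \<Longrightarrow> a \<in> Obj C \<and> b \<in> Obj C"
  using category unfolding is_category_def hom_def by auto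

lemma comp_in_hom: "f \<in> hom C a b \<Longrightarrow> g \<in> hom C b c \<Longrightarrow> Comp C g f \<in> hom C a c"
  using category unfolding is_category_def hom_def by auto

lemma comp_assoc: "f \<in> hom C a b \<Longrightarrow> g \<in> hom C b c \<Longrightarrow> h \<in> hom C c d \<Longrightarrow>
   Comp C h (Comp C g f) = Comp C (Comp C h g) f"
  using category unfolding is_category_def hom_def by auto

lemma id_in_hom: "a \<in> Obj C \<Longrightarrow> Id C a \<in> hom C a a"
  using category unfolding is_category_def by auto

lemma comp_id_right: "f \<in> hom C a b \<Longrightarrow> Comp C f (Id C a) = f"
  using category unfolding is_category_def hom_def by auto

lemma comp_id_left: "f \<in> hom C a b \<Longrightarrow> Comp C (Id C b) f = f"
  using category unfolding is_category_def hom_def by auto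

lemma hom_abelian_group: "a \<in> Obj C \<Longrightarrow> b \<in> Obj C \<Longrightarrow>
        Zero C a b \<in> hom C a b \<and>
        (\<forall>f \<in> hom C a b. \<forall>g \<in> hom C a b. Add C f g \<in> hom C a b \<and> Add C f g = Add C g f) \<and>
        (\<forall>f \<in> hom C a b. \<forall>g \<in> hom C a b. \<forall>h \<in> hom C a b.
            Add C (Add C f g) h = Add C f (Add C g h)) \<and>
        (\<forall>f \<in> hom C a b. Add C f (Zero C a b) = f) \<and>
        (\<forall>f \<in> hom C a b. \<exists>g \<in> hom C a b. Add C f g = Zero C a b)"
  using preadditive unfolding is_preadditive_def by blast

lemma zero_in_hom: "a \<in> Obj C \<Longrightarrow> b \<in> Obj C \<Longrightarrow> Zero C a b \<in> hom C a b"
  using hom_abelian_group by blast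

lemma add_in_hom: "f \<in> hom C a b \<Longrightarrow> g \<in> hom C a b \<Longrightarrow> Add C f g \<in> hom C a b"
  using hom_abelian_group hom_objs[of f a b] by blast

lemma add_commute: "f \<in> hom C a b \<Longrightarrow> g \<in> hom C a b \<Longrightarrow> Add C f g = Add C g f"
  using hom_abelian_group[of a b] hom_objs[of f a b] by blast

lemma add_assoc: "f \<in> hom C a b \<Longrightarrow> g \<in> hom C a b \<Longrightarrow> h \<in> hom C a b \<Longrightarrow>
   Add C (Add C f g) h = Add C f (Add C g h)"
  using hom_abelian_group[of a b] hom_objs[of f a b] by blast

lemma add_zero_right: "f \<in> hom C a b \<Longrightarrow> Add C f (Zero C a b) = f"
  using hom_abelian_group[of a b] hom_objs[of f a b] by blast

lemma add_zero_left: "f \<in> hom C a b \<Longrightarrow> Add C (Zero C a b) f = f"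
  using add_zero_right add_commute zero_in_hom hom_objs by metis

lemma add_inverse_ex: "f \<in> hom C a b \<Longrightarrow> \<exists>g \<in> hom C a b. Add C f g = Zero C a b"
  using hom_abelian_group[of a b] hom_objs[of f a b] by blast

lemma comp_add_distrib_left: "f \<in> hom C a b \<Longrightarrow> f' \<in> hom C a b \<Longrightarrow> g \<in> hom C b c \<Longrightarrow>
   Comp C g (Add C f f') = Add C (Comp C g f) (Comp C g f')"
  using preadditive hom_objs[of f a b] hom_objs[of g b c] unfolding is_preadditive_def by auto

lemma comp_add_distrib_right: "f \<in> hom C a b \<Longrightarrow> g \<in> hom C b c \<Longrightarrow> g' \<in> hom C b c \<Longrightarrow>
   Comp C (Add C g g') f = Add C (Comp C g f) (Comp C g' f)"
  using preadditive hom_objs[of f a b] hom_objs[of g b c] unfolding is_preadditive_def by auto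

lemma add_self_eq_zero: assumes w: "w \<in> hom C a b" and "Add C w w = w" shows "w = Zero C a b"
proof -
  obtain n where n: "n \<in> hom C a b" "Add C w n = Zero C a b" using add_inverse_ex[OF w] by auto
  have "Zero C a b = Add C (Add C w w) n" using assms n by simp
  also have "\<dots> = Add C w (Add C w n)" using add_assoc w n by simp
  also have "\<dots> = w" using n add_zero_right w by simp
  finally show ?thesis by simp
qed

lemma comp_zero_right: "g \<in> hom C b c \<Longrightarrow> a \<in> Obj C \<Longrightarrow> Comp C g (Zero C a b) = Zero C a c"
proof -
  assume g: "g \<in> hom C b c" and a: "a \<in> Obj C"
  have z: "Zero C a b \<in> hom C a b" using zero_in_hom a hom_objs g by auto
  have "Comp C g (Zero C a b) = Comp C g (Add C (Zero C a b) (Zero C a b))"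
    using add_zero_right z by simp
  also have "\<dots> = Add C (Comp C g (Zero C a b)) (Comp C g (Zero C a b))"
    using comp_add_distrib_left z g by simp
  finally show ?thesis using add_self_eq_zero comp_in_hom z g by metis
qed

lemma comp_zero_left: "f \<in> hom C a b \<Longrightarrow> c \<in> Obj C \<Longrightarrow> Comp C (Zero C b c) f = Zero C a c"
proof -
  assume f: "f \<in> hom C a b" and c: "c \<in> Obj C"
  have z: "Zero C b c \<in> hom C b c" using zero_in_hom c hom_objs f by auto
  have "Comp C (Zero C b c) f = Comp C (Add C (Zero C b c) (Zero C b c)) f"
    using add_zero_right z by simp
  also have "\<dots> = Add C (Comp C (Zero C b c) f) (Comp C (Zero C b c) f)"
    using comp_add_distrib_right z f by simp
  finally show ?thesis using add_self_eq_zero comp_in_hom z f by metis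
qed

lemma mono_cancel: "mono_mor C m \<Longrightarrow> m \<in> hom C b c \<Longrightarrow> g \<in> hom C a b \<Longrightarrow> h \<in> hom C a b \<Longrightarrow>
   Comp C m g = Comp C m h \<Longrightarrow> g = h"
  unfolding mono_mor_def hom_def by auto

lemma epi_cancel: "epi_mor C e \<Longrightarrow> e \<in> hom C a b \<Longrightarrow> g \<in> hom C b c \<Longrightarrow> h \<in> hom C b c \<Longrightarrow>
   Comp C g e = Comp C h e \<Longrightarrow> g = h"
  unfolding epi_mor_def hom_def by auto

lemma mono_cancel_zero: "mono_mor C m \<Longrightarrow> m \<in> hom C b c \<Longrightarrow> g \<in> hom C a b \<Longrightarrow>
   Comp C m g = Zero C a c \<Longrightarrow> g = Zero C a b"
  by (metis mono_cancel comp_zero_right zero_in_hom hom_objs)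

lemma epi_cancel_zero: "epi_mor C e \<Longrightarrow> e \<in> hom C a b \<Longrightarrow> x \<in> hom C b d \<Longrightarrow>
   Comp C x e = Zero C a d \<Longrightarrow> x = Zero C b d"
  by (metis epi_cancel comp_zero_left zero_in_hom hom_objs)

lemma mono_morI_zero:
  assumes m: "m \<in> hom C b c"
    and zero: "\<And>a z. z \<in> hom C a b \<Longrightarrow> Comp C m z = Zero C a c \<Longrightarrow> z = Zero C a b"
  shows "mono_mor C m"
  unfolding mono_mor_def
proof (intro conjI ballI impI)
  show "m \<in> Mor C" using m hom_iff by auto
  fix g h assume g: "g \<in> Mor C" and h: "h \<in> Mor C" and
    e: "Cod C g = Dom C m \<and> Cod C h = Dom C m \<and> Dom C g = Dom C h \<and> Comp C m g = Comp C m h"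
  define a where "a = Dom C g"
  have gh: "g \<in> hom C a b" "h \<in> hom C a b" using g h e m unfolding a_def hom_def by auto
  obtain n where n: "n \<in> hom C a b" "Add C h n = Zero C a b" using add_inverse_ex gh by blast
  have "Comp C m (Add C g n) = Add C (Comp C m g) (Comp C m n)"
    using comp_add_distrib_left gh n m by auto
  also have "\<dots> = Comp C m (Add C h n)" by (simp add: e comp_add_distrib_left[OF gh(2) n(1) m])
  also have "\<dots> = Zero C a c" using n comp_zero_right m hom_objs gh by auto
  finally have z: "Add C g n = Zero C a b" using zero add_in_hom gh n by auto
  have "g = Add C g (Add C n h)" using n add_zero_right add_commute gh by auto
  also have "\<dots> = Add C (Add C g n) h" using add_assoc n gh by auto
  also have "\<dots> = h" using z add_zero_left gh by auto
  finally show "g = h" .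
qed

lemma epi_comp: "epi_mor C e \<Longrightarrow> epi_mor C e' \<Longrightarrow> e \<in> hom C a b \<Longrightarrow> e' \<in> hom C b c \<Longrightarrow>
  epi_mor C (Comp C e' e)"
  unfolding epi_mor_def
  apply (intro conjI)
  using comp_in_hom hom_iff apply blast
  by (smt (verit, ccfv_threshold) comp_assoc comp_in_hom hom_iff)

lemma epi_comp_left:
  assumes e: "epi_mor C (Comp C j c)" and c: "c \<in> hom C a b" and j: "j \<in> hom C b d"
  shows "epi_mor C j"
  unfolding epi_mor_def
proof (intro conjI ballI impI)
  show "j \<in> Mor C" using j hom_iff by auto
  fix g h assume g: "g \<in> Mor C" and h: "h \<in> Mor C" and
    E: "Dom C g = Cod C j \<and> Dom C h = Cod C j \<and> Cod C g = Cod C h \<and> Comp C g j = Comp C h j"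
  have gh: "g \<in> hom C d (Cod C g)" "h \<in> hom C d (Cod C g)" using g h E j hom_iff by auto
  have "Comp C g (Comp C j c) = Comp C h (Comp C j c)"
    using comp_assoc[OF c j gh(1)] comp_assoc[OF c j gh(2)] E by simp
  then show "g = h" using epi_cancel[OF e comp_in_hom[OF c j] gh] by simp
qed

lemma kernel_ex: "f \<in> Mor C \<Longrightarrow> \<exists>k. is_kernel C f k"
  using abelian unfolding abelian_def by blast

lemma cokernel_ex: "f \<in> Mor C \<Longrightarrow> \<exists>c. is_cokernel C f c"
  using abelian unfolding abelian_def by blast

lemma mono_is_kernel: "mono_mor C m \<Longrightarrow> \<exists>f. is_kernel C f m"
  using abelian unfolding abelian_def by blast

lemma epi_is_cokernel: "epi_mor C e \<Longrightarrow> \<exists>f. is_cokernel C f e"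
  using abelian unfolding abelian_def by blast

lemma is_kernelD: "is_kernel C f k \<Longrightarrow> f \<in> hom C (Dom C f) (Cod C f) \<and>
   k \<in> hom C (Dom C k) (Dom C f) \<and> Comp C f k = Zero C (Dom C k) (Cod C f)"
  unfolding is_kernel_def hom_def by auto

lemma is_cokernelD: "is_cokernel C f c \<Longrightarrow> f \<in> hom C (Dom C f) (Cod C f) \<and>
   c \<in> hom C (Cod C f) (Cod C c) \<and> Comp C c f = Zero C (Dom C f) (Cod C c)"
  unfolding is_cokernel_def hom_def by auto

lemma kernel_univ:
  assumes "is_kernel C f k" and "x \<in> hom C a (Dom C f)" and "Comp C f x = Zero C a (Cod C f)"
  shows "\<exists>!u. u \<in> hom C a (Dom C k) \<and> Comp C k u = x"
proof -
  have univ: "\<forall>x\<in>Mor C. Cod C x = Dom C f \<and> Comp C f x = Zero C (Dom C x) (Cod C f) \<longrightarrow>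
        (\<exists>!u. u \<in> hom C (Dom C x) (Dom C k) \<and> Comp C k u = x)"
    using assms(1) unfolding is_kernel_def by blast
  have "x \<in> Mor C" "Cod C x = Dom C f" "Dom C x = a" using assms(2) hom_iff by auto
  then show ?thesis using univ[rule_format, of x] assms(3) by simp
qed

lemma cokernel_univ:
  assumes "is_cokernel C f c" and "x \<in> hom C (Cod C f) b" and "Comp C x f = Zero C (Dom C f) b"
  shows "\<exists>!u. u \<in> hom C (Cod C c) b \<and> Comp C u c = x"
proof -
  have univ: "\<forall>x\<in>Mor C. Dom C x = Cod C f \<and> Comp C x f = Zero C (Dom C f) (Cod C x) \<longrightarrow>
        (\<exists>!u. u \<in> hom C (Cod C c) (Cod C x) \<and> Comp C u c = x)"
    using assms(1) unfolding is_cokernel_def by blast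
  have "x \<in> Mor C" "Dom C x = Cod C f" "Cod C x = b" using assms(2) hom_iff by auto
  then show ?thesis using univ[rule_format, of x] assms(3) by simp
qed

lemma kernel_factor: "is_kernel C f k \<Longrightarrow> x \<in> hom C a (Dom C f) \<Longrightarrow>
   Comp C f x = Zero C a (Cod C f) \<Longrightarrow> \<exists>u \<in> hom C a (Dom C k). Comp C k u = x"
  using kernel_univ by blast

lemma cokernel_factor: "is_cokernel C f c \<Longrightarrow> x \<in> hom C (Cod C f) b \<Longrightarrow>
   Comp C x f = Zero C (Dom C f) b \<Longrightarrow> \<exists>u \<in> hom C (Cod C c) b. Comp C u c = x"
  using cokernel_univ by blast

lemma kernel_mono: assumes K: "is_kernel C f k" shows "mono_mor C k"
proof (rule mono_morI_zero)
  have f: "f \<in> hom C (Dom C f) (Cod C f)" and k: "k \<in> hom C (Dom C k) (Dom C f)"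
    using is_kernelD K by auto
  then show "k \<in> hom C (Dom C k) (Dom C f)" by simp
  fix a z assume z: "z \<in> hom C a (Dom C k)" and kz: "Comp C k z = Zero C a (Dom C f)"
  have a: "a \<in> Obj C" using hom_objs z by blast
  have zero: "Zero C a (Dom C f) \<in> hom C a (Dom C f)" "Zero C a (Dom C k) \<in> hom C a (Dom C k)"
    using zero_in_hom a hom_objs k by auto
  have "Comp C f (Zero C a (Dom C f)) = Zero C a (Cod C f)" using comp_zero_right f a by blast
  then have unique: "\<exists>!u. u \<in> hom C a (Dom C k) \<and> Comp C k u = Zero C a (Dom C f)"
    using kernel_univ[OF K zero(1)] by blast
  have "Comp C k (Zero C a (Dom C k)) = Zero C a (Dom C f)" using comp_zero_right k a by blast
  with unique z kz zero(2) show "z = Zero C a (Dom C k)" by blast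
qed

lemma cokernel_epi: assumes K: "is_cokernel C f c" shows "epi_mor C c"
proof -
  have ch: "c \<in> hom C (Cod C f) (Cod C c)" "f \<in> hom C (Dom C f) (Cod C f)"
    and cf: "Comp C c f = Zero C (Dom C f) (Cod C c)" using is_cokernelD K by auto
  show ?thesis unfolding epi_mor_def
  proof (intro conjI ballI impI)
    show "c \<in> Mor C" using ch hom_iff by auto
    fix g h assume g: "g \<in> Mor C" and h: "h \<in> Mor C" and
      e: "Dom C g = Cod C c \<and> Dom C h = Cod C c \<and> Cod C g = Cod C h \<and> Comp C g c = Comp C h c"
    define x where "x = Comp C g c"
    have gh: "g \<in> hom C (Cod C c) (Cod C g)" "h \<in> hom C (Cod C c) (Cod C g)"
      using g h e hom_iff by auto
    have xh: "x \<in> hom C (Cod C f) (Cod C g)" using comp_in_hom gh ch x_def by auto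
    have "Comp C x f = Comp C g (Comp C c f)"
      unfolding x_def using comp_assoc[OF ch(2) ch(1) gh(1)] by simp
    also have "\<dots> = Zero C (Dom C f) (Cod C g)" using cf comp_zero_right gh(1) hom_objs ch(2) by simp
    finally have unique: "\<exists>!u. u \<in> hom C (Cod C c) (Cod C g) \<and> Comp C u c = x"
      using cokernel_univ[OF K xh] by simp
    have "Comp C g c = x" "Comp C h c = x" using e x_def by simp_all
    with unique gh show "g = h" by blast
  qed
qed

lemma is_kernelI:
  assumes f: "f \<in> hom C a b" and k: "k \<in> hom C c a" and fk: "Comp C f k = Zero C c b"
    and m: "mono_mor C k"
    and factor: "\<And>x d. x \<in> hom C d a \<Longrightarrow> Comp C f x = Zero C d b \<Longrightarrow> \<exists>u\<in>hom C d c. Comp C k u = x"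
  shows "is_kernel C f k"
  unfolding is_kernel_def
proof (intro conjI ballI impI)
  show "f \<in> Mor C" "k \<in> Mor C" "Cod C k = Dom C f" using f k hom_iff by auto
  show "Comp C f k = Zero C (Dom C k) (Cod C f)" using fk f k hom_iff by auto
  fix x assume x: "x \<in> Mor C" and xe: "Cod C x = Dom C f \<and> Comp C f x = Zero C (Dom C x) (Cod C f)"
  have xh: "x \<in> hom C (Dom C x) a" and fx: "Comp C f x = Zero C (Dom C x) b"
    using x xe f hom_iff by auto
  obtain u where u: "u \<in> hom C (Dom C x) c" "Comp C k u = x" using factor[OF xh fx] by auto
  have Dk: "Dom C k = c" using k hom_iff by auto
  show "\<exists>!u. u \<in> hom C (Dom C x) (Dom C k) \<and> Comp C k u = x"
    using u Dk mono_cancel[OF m k] by metis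
qed

lemma is_cokernelI:
  assumes f: "f \<in> hom C a b" and c: "c \<in> hom C b d" and cf: "Comp C c f = Zero C a d"
    and e: "epi_mor C c"
    and factor: "\<And>x y. x \<in> hom C b y \<Longrightarrow> Comp C x f = Zero C a y \<Longrightarrow> \<exists>u\<in>hom C d y. Comp C u c = x"
  shows "is_cokernel C f c"
  unfolding is_cokernel_def
proof (intro conjI ballI impI)
  show "f \<in> Mor C" "c \<in> Mor C" "Dom C c = Cod C f" using f c hom_iff by auto
  show "Comp C c f = Zero C (Dom C f) (Cod C c)" using cf f c hom_iff by auto
  fix x assume x: "x \<in> Mor C" and xe: "Dom C x = Cod C f \<and> Comp C x f = Zero C (Dom C f) (Cod C x)"
  have xh: "x \<in> hom C b (Cod C x)" and fx: "Comp C x f = Zero C a (Cod C x)"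
    using x xe f hom_iff by auto
  obtain u where u: "u \<in> hom C d (Cod C x)" "Comp C u c = x" using factor[OF xh fx] by auto
  have Dk: "Cod C c = d" using c hom_iff by auto
  show "\<exists>!u. u \<in> hom C (Cod C c) (Cod C x) \<and> Comp C u c = x"
    using u Dk epi_cancel[OF e c] by metis
qed

lemma mono_is_kernel_of_cokernel:
  assumes m: "mono_mor C k" and c: "is_cokernel C k c"
  shows "is_kernel C c k"
proof -
  obtain f where f: "is_kernel C f k" using mono_is_kernel m by auto
  have kh: "k \<in> hom C (Dom C k) (Dom C f)" "f \<in> hom C (Dom C f) (Cod C f)"
    and fk: "Comp C f k = Zero C (Dom C k) (Cod C f)" using is_kernelD f by auto
  have ch: "c \<in> hom C (Cod C k) (Cod C c)" and ck: "Comp C c k = Zero C (Dom C k) (Cod C c)"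
    using is_cokernelD c by auto
  have Ck: "Cod C k = Dom C f" using kh hom_iff by auto
  obtain f' where f': "f' \<in> hom C (Cod C c) (Cod C f)" "Comp C f' c = f"
    using cokernel_factor[OF c, of f "Cod C f"] kh fk Ck by auto
  show ?thesis
  proof (rule is_kernelI[OF ch _ ck m])
    show "k \<in> hom C (Dom C k) (Cod C k)" using kh Ck by simp
    fix x d assume xh: "x \<in> hom C d (Cod C k)" and cx: "Comp C c x = Zero C d (Cod C c)"
    have "Comp C f x = Comp C f' (Comp C c x)" using comp_assoc[OF xh ch f'(1)] f' by simp
    also have "\<dots> = Zero C d (Cod C f)" using cx comp_zero_right f'(1) hom_objs xh by auto
    finally show "\<exists>u\<in>hom C d (Dom C k). Comp C k u = x"
      using kernel_factor[OF f, of x d] xh Ck by auto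
  qed
qed

lemma is_cokernel_comp_epi:
  assumes e: "epi_mor C e" "e \<in> hom C a b" and f: "f \<in> hom C b d"
  shows "is_cokernel C (Comp C f e) c \<longleftrightarrow> is_cokernel C f c"
proof -
  have fe: "Comp C f e \<in> hom C a d" using comp_in_hom e f by auto
  have kills: "Comp C x (Comp C f e) = Zero C a y \<longleftrightarrow> Comp C x f = Zero C b y"
    if x: "x \<in> hom C d y" for x y
  proof
    assume "Comp C x (Comp C f e) = Zero C a y"
    then have "Comp C (Comp C x f) e = Zero C a y" using comp_assoc e f x by metis
    then show "Comp C x f = Zero C b y" using epi_cancel_zero e comp_in_hom f x by blast
  next
    assume "Comp C x f = Zero C b y"
    then show "Comp C x (Comp C f e) = Zero C a y"
      using comp_assoc[OF e(2) f x] comp_zero_left e(2) hom_objs x by metis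
  qed
  show ?thesis
  proof
    assume A: "is_cokernel C (Comp C f e) c"
    have ch: "c \<in> hom C d (Cod C c)" "Comp C c (Comp C f e) = Zero C a (Cod C c)"
      using is_cokernelD[OF A] fe hom_iff by auto
    show "is_cokernel C f c"
    proof (rule is_cokernelI[OF f ch(1)])
      show "Comp C c f = Zero C b (Cod C c)" using kills ch by auto
      show "epi_mor C c" using cokernel_epi A by auto
      fix x y assume "x \<in> hom C d y" "Comp C x f = Zero C b y"
      then show "\<exists>u\<in>hom C (Cod C c) y. Comp C u c = x"
        using kills cokernel_factor[OF A] fe hom_iff by auto
    qed
  next
    assume A: "is_cokernel C f c"
    have ch: "c \<in> hom C d (Cod C c)" "Comp C c f = Zero C b (Cod C c)"
      using is_cokernelD[OF A] f hom_iff by auto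
    show "is_cokernel C (Comp C f e) c"
    proof (rule is_cokernelI[OF fe ch(1)])
      show "Comp C c (Comp C f e) = Zero C a (Cod C c)" using kills ch by auto
      show "epi_mor C c" using cokernel_epi A by auto
      fix x y assume "x \<in> hom C d y" "Comp C x (Comp C f e) = Zero C a y"
      then show "\<exists>u\<in>hom C (Cod C c) y. Comp C u c = x"
        using kills cokernel_factor[OF A] f hom_iff by auto
    qed
  qed
qed

lemma is_kernel_comp_mono:
  assumes m: "mono_mor C m" "m \<in> hom C b d" and g: "g \<in> hom C a b"
  shows "is_kernel C (Comp C m g) k \<longleftrightarrow> is_kernel C g k"
proof -
  have mg: "Comp C m g \<in> hom C a d" using comp_in_hom m g by auto
  have kills: "Comp C (Comp C m g) x = Zero C y d \<longleftrightarrow> Comp C g x = Zero C y b"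
    if x: "x \<in> hom C y a" for x y
  proof
    assume "Comp C (Comp C m g) x = Zero C y d"
    then have "Comp C m (Comp C g x) = Zero C y d" using comp_assoc m g x by metis
    then show "Comp C g x = Zero C y b" using mono_cancel_zero m comp_in_hom g x by blast
  next
    assume "Comp C g x = Zero C y b"
    then show "Comp C (Comp C m g) x = Zero C y d"
      using comp_assoc[OF x g m(2)] comp_zero_right m(2) hom_objs x by metis
  qed
  show ?thesis
  proof
    assume A: "is_kernel C (Comp C m g) k"
    have kh: "k \<in> hom C (Dom C k) a" "Comp C (Comp C m g) k = Zero C (Dom C k) d"
      using is_kernelD[OF A] mg hom_iff by auto
    show "is_kernel C g k"
    proof (rule is_kernelI[OF g kh(1)])
      show "Comp C g k = Zero C (Dom C k) b" using kills kh by auto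
      show "mono_mor C k" using kernel_mono A by auto
      fix x y assume "x \<in> hom C y a" "Comp C g x = Zero C y b"
      then show "\<exists>u\<in>hom C y (Dom C k). Comp C k u = x"
        using kills kernel_factor[OF A] mg hom_iff by auto
    qed
  next
    assume A: "is_kernel C g k"
    have kh: "k \<in> hom C (Dom C k) a" "Comp C g k = Zero C (Dom C k) b"
      using is_kernelD[OF A] g hom_iff by auto
    show "is_kernel C (Comp C m g) k"
    proof (rule is_kernelI[OF mg kh(1)])
      show "Comp C (Comp C m g) k = Zero C (Dom C k) d" using kills kh by auto
      show "mono_mor C k" using kernel_mono A by auto
      fix x y assume "x \<in> hom C y a" "Comp C (Comp C m g) x = Zero C y d"
      then show "\<exists>u\<in>hom C y (Dom C k). Comp C k u = x"
        using kills kernel_factor[OF A] g hom_iff by auto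
    qed
  qed
qed

lemma epi_is_cokernelI:
  assumes e: "epi_mor C e" "e \<in> hom C b d" and f: "f \<in> hom C a b" and ef: "Comp C e f = Zero C a d"
    and c: "is_cokernel C f c"
    and ker: "\<And>h y. h \<in> hom C y b \<Longrightarrow> Comp C e h = Zero C y d \<Longrightarrow> Comp C c h = Zero C y (Cod C c)"
  shows "is_cokernel C f e"
proof (rule is_cokernelI[OF f e(2) ef e(1)])
  fix x w assume x: "x \<in> hom C b w" and xf: "Comp C x f = Zero C a w"
  obtain h where h: "is_cokernel C h e" using epi_is_cokernel e by blast
  have hh: "h \<in> hom C (Dom C h) b" "Comp C e h = Zero C (Dom C h) d"
    using is_cokernelD[OF h] e(2) hom_iff by auto
  have ch: "c \<in> hom C b (Cod C c)" using is_cokernelD[OF c] f hom_iff by auto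
  obtain x' where x': "x' \<in> hom C (Cod C c) w" "Comp C x' c = x"
    using cokernel_factor[OF c, of x w] x xf f hom_iff by auto
  have "Comp C x h = Comp C x' (Comp C c h)" using comp_assoc[OF hh(1) ch x'(1)] x' by simp
  also have "\<dots> = Zero C (Dom C h) w" using ker[OF hh] comp_zero_right x'(1) hom_objs hh(1) by simp
  finally show "\<exists>u\<in>hom C d w. Comp C u e = x"
    using cokernel_factor[OF h, of x w] x hh e(2) hom_iff by auto
qed

lemma exact_at_comp_epi:
  assumes e: "epi_mor C e" "e \<in> hom C a b" and f: "f \<in> hom C b d"
  shows "exact_at C (Comp C f e) g \<longleftrightarrow> exact_at C f g"
  using is_cokernel_comp_epi[OF e f] comp_in_hom[OF e(2) f] f
  unfolding exact_at_def hom_iff by simp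

lemma exact_at_comp_mono:
  assumes m: "mono_mor C m" "m \<in> hom C b d" and g: "g \<in> hom C a b"
  shows "exact_at C f (Comp C m g) \<longleftrightarrow> exact_at C f g"
  using is_kernel_comp_mono[OF m g] comp_in_hom[OF g m(2)] g
  unfolding exact_at_def hom_iff by simp

lemma exact_at_kernel: assumes k: "is_kernel C g k" shows "exact_at C k g"
proof -
  have kh: "k \<in> hom C (Dom C k) (Dom C g)" "g \<in> hom C (Dom C g) (Cod C g)"
    using is_kernelD k by auto
  obtain c where c: "is_cokernel C k c" using cokernel_ex kh hom_iff by blast
  have ck: "is_kernel C c k" using mono_is_kernel_of_cokernel kernel_mono k c by blast
  have a: "Dom C k \<in> Obj C" using hom_objs kh by blast
  have "iso_mor C (Id C (Dom C k))"
    unfolding iso_mor_def using id_in_hom[OF a] comp_id_left hom_iff by metis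
  moreover have "Id C (Dom C k) \<in> hom C (Dom C k) (Dom C k)" "Comp C k (Id C (Dom C k)) = k"
    using id_in_hom comp_id_right kh a by auto
  moreover have "k \<in> Mor C" "g \<in> Mor C" "Cod C k = Dom C g" using kh hom_iff by auto
  ultimately show ?thesis unfolding exact_at_def using c k ck by blast
qed

lemma exact_atD:
  assumes E: "exact_at C f g"
  obtains c where "is_cokernel C f c" and "Comp C g f = Zero C (Dom C f) (Cod C g)"
    and "\<And>x y. x \<in> hom C y (Cod C f) \<Longrightarrow> Comp C g x = Zero C y (Cod C g) \<Longrightarrow>
           Comp C c x = Zero C y (Cod C c)"
proof -
  obtain c i k \<theta> where c: "is_cokernel C f c" and i: "is_kernel C c i" and k: "is_kernel C g k"
    and iso: "iso_mor C \<theta>" and th: "\<theta> \<in> hom C (Dom C i) (Dom C k)" and kth: "Comp C k \<theta> = i"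
    and fg: "Cod C f = Dom C g"
    using E unfolding exact_at_def by blast
  have ch: "c \<in> hom C (Cod C f) (Cod C c)" "f \<in> hom C (Dom C f) (Cod C f)"
    using is_cokernelD[OF c] by auto
  have Dc: "Dom C c = Cod C f" using ch hom_iff by auto
  have ih: "i \<in> hom C (Dom C i) (Cod C f)" "Comp C c i = Zero C (Dom C i) (Cod C c)"
    using is_kernelD[OF i] Dc by auto
  have kh: "k \<in> hom C (Dom C k) (Cod C f)" "g \<in> hom C (Cod C f) (Cod C g)"
    "Comp C g k = Zero C (Dom C k) (Cod C g)"
    using is_kernelD[OF k] fg by auto
  obtain \<theta>' where th': "\<theta>' \<in> hom C (Dom C k) (Dom C i)" "Comp C \<theta> \<theta>' = Id C (Dom C k)"
    using iso th hom_iff unfolding iso_mor_def by auto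
  have k_via_i: "k = Comp C i \<theta>'"
  proof -
    have "k = Comp C k (Comp C \<theta> \<theta>')" using th' comp_id_right kh by simp
    also have "\<dots> = Comp C i \<theta>'" using comp_assoc[OF th'(1) th kh(1)] kth by simp
    finally show ?thesis .
  qed
  obtain f' where f': "f' \<in> hom C (Dom C f) (Dom C i)" "Comp C i f' = f"
    using kernel_factor[OF i, of f "Dom C f"] is_cokernelD[OF c] Dc by auto
  have "Comp C g f = Comp C g (Comp C k (Comp C \<theta> f'))"
    using comp_assoc[OF f'(1) th kh(1)] kth f' by simp
  also have "\<dots> = Comp C (Comp C g k) (Comp C \<theta> f')"
    using comp_assoc[OF comp_in_hom[OF f'(1) th] kh(1) kh(2)] by simp
  also have "\<dots> = Zero C (Dom C f) (Cod C g)"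
    using kh(3) comp_zero_left comp_in_hom[OF f'(1) th] hom_objs kh(2) by simp
  finally have gf: "Comp C g f = Zero C (Dom C f) (Cod C g)" .
  have "Comp C c x = Zero C y (Cod C c)"
    if x: "x \<in> hom C y (Cod C f)" and gx: "Comp C g x = Zero C y (Cod C g)" for x y
  proof -
    obtain x' where x': "x' \<in> hom C y (Dom C k)" "Comp C k x' = x"
      using kernel_factor[OF k, of x y] x gx fg by auto
    have "Comp C c x = Comp C c (Comp C i (Comp C \<theta>' x'))"
      using comp_assoc[OF x'(1) th'(1) ih(1)] k_via_i x' by simp
    also have "\<dots> = Comp C (Comp C c i) (Comp C \<theta>' x')"
      using comp_assoc[OF comp_in_hom[OF x'(1) th'(1)] ih(1) ch(1)] by simp
    also have "\<dots> = Zero C y (Cod C c)"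
      using ih(2) comp_zero_left comp_in_hom[OF x'(1) th'(1)] hom_objs ch(1) by simp
    finally show ?thesis .
  qed
  with c gf that show ?thesis by blast
qed

lemma exact_at_comp_zero: "exact_at C f g \<Longrightarrow> Comp C g f = Zero C (Dom C f) (Cod C g)"
  by (erule exact_atD)

lemma exact_at_cokernel_factor_mono:
  assumes E: "exact_at C f g"
  obtains c j where "is_cokernel C f c" and "mono_mor C j" and "j \<in> hom C (Cod C c) (Cod C g)"
    and "g = Comp C j c"
proof -
  obtain c where c: "is_cokernel C f c" and gf: "Comp C g f = Zero C (Dom C f) (Cod C g)"
    and exact: "\<And>x y. x \<in> hom C y (Cod C f) \<Longrightarrow> Comp C g x = Zero C y (Cod C g) \<Longrightarrow>
                      Comp C c x = Zero C y (Cod C c)"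
    using exact_atD[OF E] by blast
  have ch: "c \<in> hom C (Cod C f) (Cod C c)" "f \<in> hom C (Dom C f) (Cod C f)"
    "Comp C c f = Zero C (Dom C f) (Cod C c)"
    using is_cokernelD[OF c] by auto
  have gh: "g \<in> hom C (Cod C f) (Cod C g)" using E unfolding exact_at_def hom_iff by auto
  obtain j where j: "j \<in> hom C (Cod C c) (Cod C g)" "Comp C j c = g"
    using cokernel_factor[OF c gh] gf by auto
  have cepi: "epi_mor C c" using cokernel_epi c by auto
  have "mono_mor C j"
  proof (rule mono_morI_zero[OF j(1)])
    fix a z assume z: "z \<in> hom C a (Cod C c)" and jz: "Comp C j z = Zero C a (Cod C g)"
    obtain q where q: "is_cokernel C z q" using cokernel_ex z hom_iff by blast
    have qh: "q \<in> hom C (Cod C c) (Cod C q)" "Comp C q z = Zero C a (Cod C q)"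
      using is_cokernelD[OF q] z hom_iff by auto
    obtain j' where j': "j' \<in> hom C (Cod C q) (Cod C g)" "Comp C j' q = j"
      using cokernel_factor[OF q, of j "Cod C g"] j z jz hom_iff by auto
    define e where "e = Comp C q c"
    have eh: "e \<in> hom C (Cod C f) (Cod C q)" using comp_in_hom ch qh e_def by auto
    have ge: "g = Comp C j' e" using comp_assoc[OF ch(1) qh(1) j'(1)] j' j e_def by simp
    \<comment> \<open>\<open>z\<close> vanishes since dividing the cokernel of \<open>f\<close> further by it still gives a cokernel.\<close>
    have "is_cokernel C f e"
    proof (rule epi_is_cokernelI[OF _ eh ch(2) _ c])
      show "epi_mor C e" using epi_comp[OF cepi cokernel_epi[OF q] ch(1) qh(1)] e_def by simp
      show "Comp C e f = Zero C (Dom C f) (Cod C q)"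
        using e_def comp_assoc[OF ch(2) ch(1) qh(1)] ch(3) comp_zero_right qh(1) hom_objs ch(2)
        by simp
      fix h y assume h: "h \<in> hom C y (Cod C f)" and eh0: "Comp C e h = Zero C y (Cod C q)"
      have "Comp C g h = Comp C j' (Comp C e h)" using ge comp_assoc[OF h eh j'(1)] by simp
      also have "\<dots> = Zero C y (Cod C g)" using eh0 comp_zero_right j'(1) hom_objs h by simp
      finally show "Comp C c h = Zero C y (Cod C c)" using exact h by blast
    qed
    then obtain u where u: "u \<in> hom C (Cod C q) (Cod C c)" "Comp C u e = c"
      using cokernel_factor[of f e c "Cod C c"] ch eh hom_iff by auto
    have "Comp C (Comp C u q) c = Comp C (Id C (Cod C c)) c"
      using comp_assoc[OF ch(1) qh(1) u(1)] u e_def comp_id_left ch(1) by simp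
    then have uq: "Comp C u q = Id C (Cod C c)"
      using epi_cancel[OF cepi ch(1)] comp_in_hom[OF qh(1) u(1)] id_in_hom hom_objs ch(1) by blast
    have "z = Comp C (Comp C u q) z" using uq comp_id_left z by simp
    also have "\<dots> = Comp C u (Comp C q z)" using comp_assoc[OF z qh(1) u(1)] by simp
    also have "\<dots> = Zero C a (Cod C c)" using qh(2) comp_zero_right u(1) hom_objs z by simp
    finally show "z = Zero C a (Cod C c)" .
  qed
  with c j that show ?thesis by auto
qed

lemma exact_at_mono_is_kernel:
  assumes E: "exact_at C f g" and m: "mono_mor C f"
  shows "is_kernel C g f"
proof -
  obtain c where c: "is_cokernel C f c" and gf: "Comp C g f = Zero C (Dom C f) (Cod C g)"
    and exact: "\<And>x y. x \<in> hom C y (Cod C f) \<Longrightarrow> Comp C g x = Zero C y (Cod C g) \<Longrightarrow>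
                      Comp C c x = Zero C y (Cod C c)"
    using exact_atD[OF E] by blast
  have fc: "is_kernel C c f" using mono_is_kernel_of_cokernel m c by auto
  have fh: "f \<in> hom C (Dom C f) (Cod C f)" using is_cokernelD c by auto
  have gh: "g \<in> hom C (Cod C f) (Cod C g)" using E unfolding exact_at_def hom_iff by auto
  show ?thesis
  proof (rule is_kernelI[OF gh fh gf m])
    fix x y assume "x \<in> hom C y (Cod C f)" "Comp C g x = Zero C y (Cod C g)"
    then show "\<exists>u\<in>hom C y (Dom C f). Comp C f u = x"
      using exact kernel_factor[OF fc, of x y] is_cokernelD c hom_iff by auto
  qed
qed

lemma mono_epi_retraction:
  assumes d: "d \<in> hom C X I" and m: "mono_mor C d" and e: "epi_mor C d"
  obtains u where "u \<in> hom C I X" and "Comp C u d = Id C X"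
proof -
  obtain f where f: "is_kernel C f d" using mono_is_kernel m by blast
  have fh: "f \<in> hom C I (Cod C f)" "Comp C f d = Zero C X (Cod C f)"
    using is_kernelD[OF f] d hom_iff by auto
  have f0: "f = Zero C I (Cod C f)" using epi_cancel_zero[OF e d fh(1) fh(2)] .
  have I: "I \<in> Obj C" "X \<in> Obj C" using hom_objs d by auto
  have "Comp C f (Id C I) = Zero C I (Cod C f)" using comp_id_right fh f0 by simp
  then obtain u where u: "u \<in> hom C I (Dom C d)" "Comp C d u = Id C I"
    using kernel_factor[OF f, of "Id C I" I] id_in_hom I fh hom_iff by auto
  have uh: "u \<in> hom C I X" using u d hom_iff by auto
  have "Comp C d (Comp C u d) = Comp C d (Id C X)"
    using comp_assoc[OF d uh d] u comp_id_left comp_id_right d by simp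
  then have "Comp C u d = Id C X" using mono_cancel[OF m d] comp_in_hom[OF d uh] id_in_hom I by blast
  with uh that show ?thesis by blast
qed

lemma injective_extend_exact:
  assumes E: "exact_at C f g" and fh: "f \<in> hom C A B" and gh: "g \<in> hom C B D"
    and I: "injective C I" and ph: "\<phi> \<in> hom C B I" and pf: "Comp C \<phi> f = Zero C A I"
  shows "\<exists>\<psi>\<in>hom C D I. Comp C \<psi> g = \<phi>"
proof -
  obtain c j where c: "is_cokernel C f c" and j: "mono_mor C j" "j \<in> hom C (Cod C c) (Cod C g)"
    and gj: "g = Comp C j c" using exact_at_cokernel_factor_mono[OF E] by blast
  have ch: "c \<in> hom C B (Cod C c)" using is_cokernelD[OF c] fh hom_iff by auto
  obtain p where p: "p \<in> hom C (Cod C c) I" "Comp C p c = \<phi>"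
    using cokernel_factor[OF c, of \<phi> I] ph pf fh hom_iff by auto
  obtain \<psi> where psi: "\<psi> \<in> hom C (Cod C j) I" "Comp C \<psi> j = p"
    using I j p hom_iff unfolding injective_def by metis
  have psi': "\<psi> \<in> hom C D I" "\<psi> \<in> hom C (Cod C g) I" using psi j gh hom_iff by auto
  have "Comp C \<psi> g = \<phi>" using gj comp_assoc[OF ch j(2) psi'(2)] psi p by simp
  with psi' show ?thesis by blast
qed

lemma injective_of_inj_res_len_0:
  assumes "inj_res_len C X 0"
  shows "injective C X"
proof -
  obtain I d where d: "d \<in> hom C X I" and I: "injective C I" and m: "mono_mor C d"
    and e: "epi_mor C d"
    using assms unfolding inj_res_len_def by auto
  obtain u where u: "u \<in> hom C I X" "Comp C u d = Id C X" using mono_epi_retraction[OF d m e] .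
  show ?thesis unfolding injective_def
  proof (intro conjI allI impI)
    show "X \<in> Obj C" using hom_objs d by blast
    fix m f assume mf: "mono_mor C m \<and> f \<in> hom C (Dom C m) X"
    then have m: "m \<in> hom C (Dom C m) (Cod C m)" and f: "f \<in> hom C (Dom C m) X"
      unfolding mono_mor_def hom_iff by auto
    obtain g where g: "g \<in> hom C (Cod C m) I" "Comp C g m = Comp C d f"
      using I mf comp_in_hom[OF f d] unfolding injective_def by blast
    have "Comp C (Comp C u g) m = Comp C u (Comp C d f)" using comp_assoc[OF m g(1) u(1)] g by simp
    also have "\<dots> = f" using comp_assoc[OF f d u(1)] u comp_id_left f by simp
    finally show "\<exists>g\<in>hom C (Cod C m) X. Comp C g m = f" using comp_in_hom[OF g(1) u(1)] by blast
  qed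
qed

lemma inj_res_len_Suc_cosyzygy:
  assumes "inj_res_len C X (Suc m)"
  obtains I d c X' where "injective C I" and "d \<in> hom C X I" and "mono_mor C d"
    and "c \<in> hom C I X'" and "epi_mor C c" and "is_kernel C c d" and "inj_res_len C X' m"
proof -
  obtain S d where S: "S 0 = X" "\<forall>j\<le>Suc m. d j \<in> hom C (S j) (S (Suc j))"
    "\<forall>j\<le>Suc m. injective C (S (Suc j))" "mono_mor C (d 0)"
    "\<forall>j<Suc m. exact_at C (d j) (d (Suc j))" "epi_mor C (d (Suc m))"
    using assms unfolding inj_res_len_def by auto
  have d0: "d 0 \<in> hom C X (S (Suc 0))" using S by auto
  have d1: "d (Suc 0) \<in> hom C (S (Suc 0)) (S (Suc (Suc 0)))" using S by auto
  obtain c j where c: "is_cokernel C (d 0) c"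
    and j: "mono_mor C j" "j \<in> hom C (Cod C c) (Cod C (d (Suc 0)))" and dj: "d (Suc 0) = Comp C j c"
    using exact_at_cokernel_factor_mono S(5) by blast
  define X' where "X' = Cod C c"
  have ch: "c \<in> hom C (S (Suc 0)) X'" using is_cokernelD[OF c] d0 hom_iff X'_def by auto
  have jh: "j \<in> hom C X' (S (Suc (Suc 0)))" using j d1 hom_iff X'_def by auto
  have cepi: "epi_mor C c" using cokernel_epi c by auto
  have "inj_res_len C X' m"
    unfolding inj_res_len_def
  proof (intro exI[of _ "\<lambda>k. if k = 0 then X' else S (Suc k)"]
      exI[of _ "\<lambda>k. if k = 0 then j else d (Suc k)"] conjI allI impI)
    have "exact_at C j (d (Suc (Suc 0)))" if "0 < m"
      using S(5) that dj exact_at_comp_epi[OF cepi ch jh] by auto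
    then show "exact_at C (if k = 0 then j else d (Suc k)) (if Suc k = 0 then j else d (Suc (Suc k)))"
      if "k < m" for k
      using S(5) that by auto
    show "epi_mor C (if m = 0 then j else d (Suc m))"
      using S(6) dj epi_comp_left[OF _ ch jh] by auto
  qed (use j jh S(2,3) in auto)
  with S(3) d0 S(4) ch cepi mono_is_kernel_of_cokernel[OF S(4) c] X'_def that show ?thesis
    by auto
qed

end

section \<open>Hom into objects of finite injective dimension\<close>

definition proj_exact_seq :: "('o,'m) acat \<Rightarrow> (nat \<Rightarrow> 'o) \<Rightarrow> (nat \<Rightarrow> 'm) \<Rightarrow> bool" where
  "proj_exact_seq C T e \<longleftrightarrow> (\<forall>j. e j \<in> hom C (T j) (T (Suc j))) \<and>
     (\<forall>j. exact_at C (e j) (e (Suc j))) \<and> (\<forall>j. projective C (T j))"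

text \<open>Exactness of \<open>Hom(T 2, X) \<rightarrow> Hom(T 1, X) \<rightarrow> Hom(T 0, X)\<close> at the middle term.\<close>

definition hom_into_exact :: "('o,'m) acat \<Rightarrow> (nat \<Rightarrow> 'o) \<Rightarrow> (nat \<Rightarrow> 'm) \<Rightarrow> 'o \<Rightarrow> bool" where
  "hom_into_exact C T e X \<longleftrightarrow>
     (\<forall>\<phi> \<in> hom C (T (Suc 0)) X. Comp C \<phi> (e 0) = Zero C (T 0) X \<longrightarrow>
        (\<exists>\<psi> \<in> hom C (T (Suc (Suc 0))) X. Comp C \<psi> (e (Suc 0)) = \<phi>))"

lemma proj_exact_seq_shift:
  "proj_exact_seq C T e \<Longrightarrow> proj_exact_seq C (\<lambda>k. T (Suc k)) (\<lambda>k. e (Suc k))"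
  unfolding proj_exact_seq_def by simp

context abelian_category
begin

lemma injective_hom_into_exact:
  assumes "injective C X" and "proj_exact_seq C T e"
  shows "hom_into_exact C T e X"
  using assms injective_extend_exact unfolding proj_exact_seq_def hom_into_exact_def by blast

lemma hom_into_exact_cosyzygy:
  assumes I: "injective C I" and d: "d \<in> hom C X I" "mono_mor C d"
    and c: "c \<in> hom C I X'" "epi_mor C c" and ker: "is_kernel C c d"
    and T: "proj_exact_seq C T e"
    and X': "hom_into_exact C (\<lambda>k. T (Suc k)) (\<lambda>k. e (Suc k)) X'"
  shows "hom_into_exact C T e X"
  unfolding hom_into_exact_def
proof (intro ballI impI)
  fix \<phi> assume ph: "\<phi> \<in> hom C (T (Suc 0)) X" and pe: "Comp C \<phi> (e 0) = Zero C (T 0) X"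
  have eh: "\<And>k. e k \<in> hom C (T k) (T (Suc k))" and ex: "\<And>k. exact_at C (e k) (e (Suc k))"
    and proj: "\<And>k. projective C (T k)"
    using T unfolding proj_exact_seq_def by auto
  have "Comp C (Comp C d \<phi>) (e 0) = Comp C d (Comp C \<phi> (e 0))" using comp_assoc[OF eh ph d(1)] by simp
  also have "\<dots> = Zero C (T 0) I" using pe comp_zero_right d(1) hom_objs[OF eh[of 0]] by simp
  finally obtain g where g: "g \<in> hom C (T (Suc (Suc 0))) I" "Comp C g (e (Suc 0)) = Comp C d \<phi>"
    using injective_extend_exact[OF ex eh eh I comp_in_hom[OF ph d(1)]] by blast
  \<comment> \<open>Correct \<open>g\<close> by a morphism vanishing on the image of \<open>e 1\<close> so that it lands in \<open>X\<close>.\<close>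
  define h where "h = Comp C c g"
  have hh: "h \<in> hom C (T (Suc (Suc 0))) X'" using comp_in_hom g c h_def by auto
  have cd: "Comp C c d = Zero C X X'" using is_kernelD[OF ker] d c hom_iff by auto
  have "Comp C h (e (Suc 0)) = Comp C (Comp C c d) \<phi>"
    using h_def comp_assoc[OF eh g(1) c(1)] g comp_assoc[OF ph d(1) c(1)] by simp
  also have "\<dots> = Zero C (T (Suc 0)) X'" using cd comp_zero_left ph hom_objs c(1) by simp
  finally obtain h' where h': "h' \<in> hom C (T (Suc (Suc (Suc 0)))) X'"
      "Comp C h' (e (Suc (Suc 0))) = h"
    using X' hh unfolding hom_into_exact_def by auto
  obtain w' where w': "w' \<in> hom C (T (Suc (Suc (Suc 0)))) I" "Comp C c w' = h'"
    using proj c h' hom_iff unfolding projective_def by metis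
  define w where "w = Comp C w' (e (Suc (Suc 0)))"
  have wh: "w \<in> hom C (T (Suc (Suc 0))) I" using comp_in_hom[OF eh w'(1)] w_def by auto
  have cw: "Comp C c w = h" using w_def comp_assoc[OF eh w'(1) c(1)] w' h' by simp
  have we: "Comp C w (e (Suc 0)) = Zero C (T (Suc 0)) I"
    using w_def comp_assoc[OF eh eh w'(1)] exact_at_comp_zero[OF ex] comp_zero_right w'(1)
      hom_objs eh hom_iff by metis
  obtain n where n: "n \<in> hom C (T (Suc (Suc 0))) I" "Add C w n = Zero C (T (Suc (Suc 0))) I"
    using add_inverse_ex wh by blast
  define z where "z = Add C g n"
  have zh: "z \<in> hom C (T (Suc (Suc 0))) I" using add_in_hom g n z_def by auto
  have "Comp C c z = Add C h (Comp C c n)" using z_def comp_add_distrib_left[OF g(1) n(1) c(1)] h_def by simp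
  also have "\<dots> = Comp C c (Add C w n)" using comp_add_distrib_left[OF wh n(1) c(1)] cw by simp
  also have "\<dots> = Zero C (T (Suc (Suc 0))) X'" using n(2) comp_zero_right c(1) hom_objs wh by simp
  finally obtain \<psi> where psi: "\<psi> \<in> hom C (T (Suc (Suc 0))) X" "Comp C d \<psi> = z"
    using kernel_factor[OF ker, of z] zh c(1) d(1) hom_iff by auto
  have "Add C (Comp C w (e (Suc 0))) (Comp C n (e (Suc 0))) = Zero C (T (Suc 0)) I"
    using comp_add_distrib_right[OF eh wh n(1)] n(2) comp_zero_left eh hom_objs wh by metis
  then have ne: "Comp C n (e (Suc 0)) = Zero C (T (Suc 0)) I"
    using we add_zero_left comp_in_hom[OF eh n(1)] by metis
  have "Comp C d (Comp C \<psi> (e (Suc 0))) = Comp C z (e (Suc 0))"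
    using comp_assoc[OF eh psi(1) d(1)] psi by simp
  also have "\<dots> = Add C (Comp C d \<phi>) (Zero C (T (Suc 0)) I)"
    using z_def comp_add_distrib_right[OF eh g(1) n(1)] g ne by simp
  also have "\<dots> = Comp C d \<phi>" using add_zero_right comp_in_hom[OF ph d(1)] by simp
  finally have "Comp C \<psi> (e (Suc 0)) = \<phi>"
    using mono_cancel[OF d(2) d(1) comp_in_hom[OF eh psi(1)] ph] by simp
  with psi show "\<exists>\<psi>\<in>hom C (T (Suc (Suc 0))) X. Comp C \<psi> (e (Suc 0)) = \<phi>" by blast
qed

lemma hom_into_exact_of_inj_res_len:
  assumes "inj_res_len C X m" and "proj_exact_seq C T e"
  shows "hom_into_exact C T e X"
  using assms
proof (induction m arbitrary: X T e)
  case 0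
  then show ?case using injective_of_inj_res_len_0 injective_hom_into_exact by blast
next
  case (Suc m)
  obtain I d c X' where "injective C I" "d \<in> hom C X I" "mono_mor C d" "c \<in> hom C I X'"
    "epi_mor C c" "is_kernel C c d" "inj_res_len C X' m"
    using inj_res_len_Suc_cosyzygy[OF Suc.prems(1)] .
  with Suc.IH Suc.prems(2) proj_exact_seq_shift show ?case by (blast intro: hom_into_exact_cosyzygy)
qed

lemma hom_exact_int_complex:
  fixes P :: "int \<Rightarrow> 'o" and i :: int
  assumes proj: "\<And>i. projective C (P i)" and hom: "\<And>i. d i \<in> hom C (P i) (P (i + 1))"
    and exact: "\<And>i. exact_at C (d i) (d (i + 1))"
    and R: "inj_res_len C R m" and ph: "\<phi> \<in> hom C (P i) R"
    and pd: "Comp C \<phi> (d (i - 1)) = Zero C (P (i - 1)) R"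
  shows "\<exists>\<psi>\<in>hom C (P (i + 1)) R. \<phi> = Comp C \<psi> (d i)"
proof -
  define T where "T j = P (i - 1 + int j)" for j
  define e where "e j = d (i - 1 + int j)" for j
  have shift: "i - 1 + int (Suc j) = (i - 1 + int j) + 1" for j by simp
  have "proj_exact_seq C T e"
    unfolding proj_exact_seq_def T_def e_def using proj hom exact shift by metis
  then have "hom_into_exact C T e R" using hom_into_exact_of_inj_res_len[OF R] by blast
  moreover have "T (Suc 0) = P i" "T 0 = P (i - 1)" "e 0 = d (i - 1)"
    "T (Suc (Suc 0)) = P (i + 1)" "e (Suc 0) = d i"
    unfolding T_def e_def by (simp_all add: add.commute)
  ultimately show ?thesis using ph pd unfolding hom_into_exact_def by auto
qed

section \<open>Complete resolutions\<close>

lemma projective_resolution: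
  assumes EP: "enough_projectives C" and M: "M \<in> Obj C"
  obtains A Q E K where "A 0 = M" and "\<And>n. projective C (Q n)" and "\<And>n. E n \<in> hom C (Q n) (A n)"
    and "\<And>n. epi_mor C (E n)" and "\<And>n. is_kernel C (E n) (K n)"
    and "\<And>n. K n \<in> hom C (A (Suc n)) (Q n)"
proof -
  obtain cover cover_epi where cover: "\<And>X. X \<in> Obj C \<Longrightarrow>
      projective C (cover X) \<and> cover_epi X \<in> hom C (cover X) X \<and> epi_mor C (cover_epi X)"
    using EP unfolding enough_projectives_def by metis
  obtain ker where ker: "\<And>f. f \<in> Mor C \<Longrightarrow> is_kernel C f (ker f)" using kernel_ex by metis
  define A where "A = rec_nat M (\<lambda>_ X. Dom C (ker (cover_epi X)))"
  have A0: "A 0 = M" and AS: "A (Suc n) = Dom C (ker (cover_epi (A n)))" for n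
    unfolding A_def by simp_all
  have kernel: "is_kernel C (cover_epi (A n)) (ker (cover_epi (A n)))" if "A n \<in> Obj C" for n
    using ker cover[OF that] hom_iff by blast
  have A: "A n \<in> Obj C" for n
  proof (induction n)
    case (Suc n)
    then show ?case using AS is_kernelD[OF kernel[OF Suc]] hom_objs by metis
  qed (use A0 M in simp)
  have "ker (cover_epi (A n)) \<in> hom C (A (Suc n)) (cover (A n))" for n
    using is_kernelD[OF kernel[OF A]] cover[OF A] AS hom_iff by auto
  then show thesis
    by (intro that[of A "\<lambda>n. cover (A n)" "\<lambda>n. cover_epi (A n)" "\<lambda>n. ker (cover_epi (A n))"])
      (use A0 A cover kernel in auto)
qed

end

lemma inj_res_len_of_sidp_finite:
  assumes "sidp C < \<infinity>" and "projective C R"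
  obtains m where "inj_res_len C R m"
proof -
  have "inj_dim C R \<le> sidp C" unfolding sidp_def using assms(2) by (auto intro: SUP_upper)
  then have "inj_dim C R < \<infinity>" using assms(1) by (rule le_less_trans)
  have "{n. inj_res_len C R n} \<noteq> {}"
  proof
    assume empty: "{n. inj_res_len C R n} = {}"
    have "inj_dim C R = \<infinity>" unfolding inj_dim_def empty by (simp add: top_enat_def)
    with \<open>inj_dim C R < \<infinity>\<close> show False by simp
  qed
  with that show ?thesis by blast
qed

text \<open>The complete resolution \<open>\<cdots> \<rightarrow> Q 1 \<rightarrow> Q 0 \<rightarrow> S 1 \<rightarrow> S 2 \<rightarrow> \<cdots>\<close> spliced from a
  projective resolution \<open>E n : Q n \<rightarrow> A n\<close> with kernels \<open>K n : A (n + 1) \<rightarrow> Q n\<close> and a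
  coresolution \<open>dS n : S n \<rightarrow> S (n + 1)\<close>, both of \<open>A 0 = S 0\<close>: the degree \<open>-1\<close> term is
  \<open>Q 0\<close>, the degree \<open>0\<close> term is \<open>S 1\<close>.\<close>

definition splice_obj :: "(nat \<Rightarrow> 'o) \<Rightarrow> (nat \<Rightarrow> 'o) \<Rightarrow> int \<Rightarrow> 'o" where
  "splice_obj Q S i = (if 0 \<le> i then S (Suc (nat i)) else Q (nat (- i - 1)))"

definition splice_mor ::
  "('o,'m) acat \<Rightarrow> (nat \<Rightarrow> 'm) \<Rightarrow> (nat \<Rightarrow> 'm) \<Rightarrow> (nat \<Rightarrow> 'm) \<Rightarrow> int \<Rightarrow> 'm" where
  "splice_mor C E K dS i =
     (if 0 \<le> i then dS (Suc (nat i))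
      else if i = -1 then Comp C (dS 0) (E 0)
      else Comp C (K (nat (- i - 2))) (E (nat (- i - 1))))"

lemma splice_at_nonneg:
  assumes "i = int n"
  shows "splice_obj Q S i = S (Suc n)" "splice_obj Q S (i + 1) = S (Suc (Suc n))"
    "splice_mor C E K dS i = dS (Suc n)" "splice_mor C E K dS (i + 1) = dS (Suc (Suc n))"
  using assms by (auto simp: splice_obj_def splice_mor_def nat_add_distrib)

lemma splice_at_minus_one:
  assumes "i = -1"
  shows "splice_obj Q S i = Q 0" "splice_obj Q S (i + 1) = S (Suc 0)"
    "splice_mor C E K dS i = Comp C (dS 0) (E 0)" "splice_mor C E K dS (i + 1) = dS (Suc 0)"
  using assms by (auto simp: splice_obj_def splice_mor_def)

lemma splice_at_below:
  assumes "i = - int n - 2"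
  shows "splice_obj Q S i = Q (Suc n)" "splice_obj Q S (i + 1) = Q n"
    "splice_mor C E K dS i = Comp C (K n) (E (Suc n))"
    "splice_mor C E K dS (i + 1) =
       (case n of 0 \<Rightarrow> Comp C (dS 0) (E 0) | Suc k \<Rightarrow> Comp C (K k) (E n))"
  using assms by (auto simp: splice_obj_def splice_mor_def nat_add_distrib split: nat.split)

lemma int_cases_minus_one:
  fixes i :: int
  obtains n where "i = int n" | "i = -1" | n where "i = - int n - 2"
proof -
  consider "i \<ge> 0" | "i = -1" | "i \<le> -2" by linarith
  then show ?thesis
  proof cases
    case 1 then show ?thesis using that(1)[of "nat i"] by simp
  next
    case 2 then show ?thesis using that(2) by simp
  next
    case 3 then show ?thesis using that(3)[of "nat (- i - 2)"] by simp
  qed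
qed

context abelian_category
begin

context
  fixes M S dS A Q E K
  assumes S0: "S 0 = M" and dS: "\<And>i. dS i \<in> hom C (S i) (S (Suc i))"
    and S_proj: "\<And>i. projective C (S (Suc i))" and dS_mono: "mono_mor C (dS 0)"
    and dS_exact: "\<And>i. exact_at C (dS i) (dS (Suc i))"
    and A0: "A 0 = M" and Q_proj: "\<And>n. projective C (Q n)" and E: "\<And>n. E n \<in> hom C (Q n) (A n)"
    and E_epi: "\<And>n. epi_mor C (E n)" and K_ker: "\<And>n. is_kernel C (E n) (K n)"
    and K: "\<And>n. K n \<in> hom C (A (Suc n)) (Q n)"
begin

lemma resolution_exact_at:
  assumes "mono_mor C m" and "m \<in> hom C (A n) Y"
  shows "exact_at C (Comp C (K n) (E (Suc n))) (Comp C m (E n))"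
  using exact_at_kernel[OF K_ker] exact_at_comp_mono[OF assms E]
    exact_at_comp_epi[OF E_epi E K] by simp

lemma splice_projective: "projective C (splice_obj Q S i)"
proof (cases i rule: int_cases_minus_one)
  case (1 n)
  show ?thesis using S_proj by (simp add: splice_at_nonneg[OF 1])
next
  case 2
  show ?thesis using Q_proj by (simp add: splice_at_minus_one[OF 2])
next
  case (3 n)
  show ?thesis using Q_proj by (simp add: splice_at_below[OF 3])
qed

lemma splice_hom: "splice_mor C E K dS i \<in> hom C (splice_obj Q S i) (splice_obj Q S (i + 1))"
proof (cases i rule: int_cases_minus_one)
  case (1 n)
  show ?thesis using dS by (simp add: splice_at_nonneg[OF 1])
next
  case 2
  have "dS 0 \<in> hom C (A 0) (S (Suc 0))" using dS[of 0] A0 S0 by simp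
  then show ?thesis using comp_in_hom[OF E] by (simp add: splice_at_minus_one[OF 2])
next
  case (3 n)
  show ?thesis using comp_in_hom[OF E K] by (simp add: splice_at_below[OF 3])
qed

lemma splice_exact: "exact_at C (splice_mor C E K dS i) (splice_mor C E K dS (i + 1))"
proof (cases i rule: int_cases_minus_one)
  case (1 n)
  show ?thesis using dS_exact by (simp add: splice_at_nonneg[OF 1])
next
  case 2
  have "dS 0 \<in> hom C (A 0) (S (Suc 0))" using dS[of 0] A0 S0 by simp
  then show ?thesis using dS_exact exact_at_comp_epi[OF E_epi E]
    by (simp add: splice_at_minus_one[OF 2])
next
  case (3 n)
  have dS0: "dS 0 \<in> hom C (A 0) (S (Suc 0))" using dS[of 0] A0 S0 by simp
  show ?thesis
  proof (cases n)
    case 0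
    then show ?thesis using resolution_exact_at[OF dS_mono dS0] by (simp add: splice_at_below[OF 3])
  next
    case (Suc k)
    then show ?thesis using resolution_exact_at[OF kernel_mono[OF K_ker] K, of k]
      by (simp add: splice_at_below[OF 3])
  qed
qed

lemma splice_kernel: "is_kernel C (splice_mor C E K dS 0) (dS 0)"
  using exact_at_mono_is_kernel[OF dS_exact dS_mono] by (simp add: splice_at_nonneg(3)[of 0 0])

end

end

theorem lemmaA3:
  fixes C :: "('o, 'm) acat" and M :: 'o
  assumes "abelian C"
    and "enough_projectives C"
    and "enough_injectives C"
    and "sidp C < \<infinity>"
    and "M \<in> Obj C"
    and "\<exists>(S :: nat \<Rightarrow> 'o) d. S 0 = M \<and>
           (\<forall>i. d i \<in> hom C (S i) (S (Suc i))) \<and>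
           (\<forall>i. projective C (S (Suc i))) \<and>
           mono_mor C (d 0) \<and>
           (\<forall>i. exact_at C (d i) (d (Suc i)))"
  shows "gorenstein_projective C M"
proof -
  interpret abelian_category C by (rule abelian_category.intro) fact
  obtain S :: "nat \<Rightarrow> 'o" and dS where S: "S 0 = M" "\<And>i. dS i \<in> hom C (S i) (S (Suc i))"
    "\<And>i. projective C (S (Suc i))" "mono_mor C (dS 0)" "\<And>i. exact_at C (dS i) (dS (Suc i))"
    using assms(6) by blast
  obtain A Q E K where R: "A 0 = M" "\<And>n. projective C (Q n)" "\<And>n. E n \<in> hom C (Q n) (A n)"
    "\<And>n. epi_mor C (E n)" "\<And>n. is_kernel C (E n) (K n)" "\<And>n. K n \<in> hom C (A (Suc n)) (Q n)"
    using projective_resolution[OF assms(2,5)] by blast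
  note splice = splice_projective[OF S R] splice_hom[OF S R] splice_exact[OF S R]
  have "\<exists>\<psi>\<in>hom C (splice_obj Q S (i + 1)) R'. \<phi> = Comp C \<psi> (splice_mor C E K dS i)"
    if "projective C R'" "\<phi> \<in> hom C (splice_obj Q S i) R'"
      "Comp C \<phi> (splice_mor C E K dS (i - 1)) = Zero C (splice_obj Q S (i - 1)) R'" for R' i \<phi>
    using inj_res_len_of_sidp_finite[OF assms(4) that(1)] hom_exact_int_complex[OF splice _ that(2,3)]
    by blast
  moreover have "Dom C (dS 0) = M" using S(1,2) hom_iff by metis
  ultimately show ?thesis
    unfolding gorenstein_projective_def using assms(5) splice splice_kernel[OF S R] by blast
qed

end
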